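(* Let $G$ be a $P_5$-free graph that is minimally non-perfectly divisible. Then $G$ does not contain a clique cutset.
   Context: All graphs are finite and simple. For $S\subseteq V(G)$, $G[S]$ is the subgraph induced by $S$. $\omega(G)$ is the number of vertices in a largest clique of $G$ and $\chi(G)$ the chromatic number. A graph $G$ is perfect if $\chi(H)=\omega(H)$ for every induced subgraph $H$ of $G$. A partition $(A,B)$ of $V(G)$ is good if $G[A]$ is perfect and $\omega(G[B])<\omega(G)$. A graph $G$ is perfectly divisible if every induced subgraph $H$ of $G$ with at least one edge admits a good partition (of $V(H)$). A graph is minimally non-perfectly divisible if it is not perfectly divisible but each of its proper induced subgraphs is perfectly divisible. A set $C\subseteq V(G)$ is a clique cutset if $C$ induces a clique in $G$ and $G-C$ is disconnected. $P_5$ is the chordless path on five vertices; $G$ is $P_5$-free if it has no induced subgraph isomorphic to $P_5$. *)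

theory Defs
  imports Main
begin

text \<open>A finite simple graph is given by a finite vertex set V and an adjacency
relation E that is symmetric and irreflexive. The induced subgraph G[S] for S a
subset of V is represented by the pair (S, E).\<close>

definition simple_graph :: "'a set \<Rightarrow> ('a \<Rightarrow> 'a \<Rightarrow> bool) \<Rightarrow> bool" where
  "simple_graph V E \<longleftrightarrow> finite V \<and> (\<forall>x y. E x y \<longrightarrow> E y x) \<and> (\<forall>x. \<not> E x x)"

definition is_clique :: "('a \<Rightarrow> 'a \<Rightarrow> bool) \<Rightarrow> 'a set \<Rightarrow> bool" where
  "is_clique E K \<longleftrightarrow> (\<forall>x\<in>K. \<forall>y\<in>K. x \<noteq> y \<longrightarrow> E x y)"

definition clique_number :: "'a set \<Rightarrow> ('a \<Rightarrow> 'a \<Rightarrow> bool) \<Rightarrow> nat" where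
  "clique_number S E = Max {card K | K. K \<subseteq> S \<and> is_clique E K}"

definition proper_colouring :: "'a set \<Rightarrow> ('a \<Rightarrow> 'a \<Rightarrow> bool) \<Rightarrow> nat \<Rightarrow> ('a \<Rightarrow> nat) \<Rightarrow> bool" where
  "proper_colouring S E k f \<longleftrightarrow>
     (\<forall>x\<in>S. f x < k) \<and> (\<forall>x\<in>S. \<forall>y\<in>S. E x y \<longrightarrow> f x \<noteq> f y)"

definition chromatic_number :: "'a set \<Rightarrow> ('a \<Rightarrow> 'a \<Rightarrow> bool) \<Rightarrow> nat" where
  "chromatic_number S E = (LEAST k. \<exists>f. proper_colouring S E k f)"

definition perfect :: "'a set \<Rightarrow> ('a \<Rightarrow> 'a \<Rightarrow> bool) \<Rightarrow> bool" where
  "perfect S E \<longleftrightarrow> (\<forall>H \<subseteq> S. chromatic_number H E = clique_number H E)"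

definition good_partition :: "'a set \<Rightarrow> ('a \<Rightarrow> 'a \<Rightarrow> bool) \<Rightarrow> 'a set \<Rightarrow> 'a set \<Rightarrow> bool" where
  "good_partition S E A B \<longleftrightarrow>
     A \<union> B = S \<and> A \<inter> B = {} \<and> perfect A E \<and> clique_number B E < clique_number S E"

definition has_edge :: "'a set \<Rightarrow> ('a \<Rightarrow> 'a \<Rightarrow> bool) \<Rightarrow> bool" where
  "has_edge S E \<longleftrightarrow> (\<exists>x\<in>S. \<exists>y\<in>S. E x y)"

definition perfectly_divisible :: "'a set \<Rightarrow> ('a \<Rightarrow> 'a \<Rightarrow> bool) \<Rightarrow> bool" where
  "perfectly_divisible S E \<longleftrightarrow>
     (\<forall>H \<subseteq> S. has_edge H E \<longrightarrow> (\<exists>A B. good_partition H E A B))"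

definition minimally_non_pd :: "'a set \<Rightarrow> ('a \<Rightarrow> 'a \<Rightarrow> bool) \<Rightarrow> bool" where
  "minimally_non_pd S E \<longleftrightarrow>
     \<not> perfectly_divisible S E \<and> (\<forall>H. H \<subset> S \<longrightarrow> perfectly_divisible H E)"

definition induced_P5 :: "'a set \<Rightarrow> ('a \<Rightarrow> 'a \<Rightarrow> bool) \<Rightarrow> bool" where
  "induced_P5 S E \<longleftrightarrow> (\<exists>v :: nat \<Rightarrow> 'a.
     (\<forall>i<5. v i \<in> S) \<and> inj_on v {0..<5} \<and>
     (\<forall>i<5. \<forall>j<5. E (v i) (v j) \<longleftrightarrow> (i = j + 1 \<or> j = i + 1)))"

definition P5_free :: "'a set \<Rightarrow> ('a \<Rightarrow> 'a \<Rightarrow> bool) \<Rightarrow> bool" where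
  "P5_free S E \<longleftrightarrow> \<not> induced_P5 S E"

definition connected_in :: "'a set \<Rightarrow> ('a \<Rightarrow> 'a \<Rightarrow> bool) \<Rightarrow> 'a \<Rightarrow> 'a \<Rightarrow> bool" where
  "connected_in S E x y \<longleftrightarrow> (\<lambda>a b. a \<in> S \<and> b \<in> S \<and> E a b)\<^sup>*\<^sup>* x y"

definition disconnected :: "'a set \<Rightarrow> ('a \<Rightarrow> 'a \<Rightarrow> bool) \<Rightarrow> bool" where
  "disconnected S E \<longleftrightarrow> (\<exists>x\<in>S. \<exists>y\<in>S. \<not> connected_in S E x y)"

definition clique_cutset :: "'a set \<Rightarrow> ('a \<Rightarrow> 'a \<Rightarrow> bool) \<Rightarrow> 'a set \<Rightarrow> bool" where
  "clique_cutset S E C \<longleftrightarrow> C \<subseteq> S \<and> is_clique E C \<and> disconnected (S - C) E"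

end

theory Submission
  imports Defs
begin

(*
  Let C be a clique cutset of minimum size, X one component of G - C and Y the rest of G - C.
  By minimality every vertex c of C has a neighbour in each component of G - C. If c also had
  a non-neighbour in X and one in the component of some vertex of Y, walking inside each of the
  two components from a neighbour to a non-neighbour of c would give edges p q and p' q' such
  that q - p - c - p' - q' is an induced P5. So every vertex of C is complete to X or to Y.

  G has a good partition iff some perfect set of vertices meets every maximum clique of G. As G
  is minimally non-perfectly divisible, G has no such set but every nonempty proper induced
  subgraph has one. Every maximum clique lies in X \<union> C or in Y \<union> C. If C is complete to X, then
  every maximum clique meeting X is C together with a maximum clique of G[X]; so the set for
  G[Y \<union> C] works for G if it meets C, and otherwise its union with the set for G[X] does. If
  neither side is complete to C, vertices u, v of C complete to Y and to X give the set {u, v}.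
*)

lemma simple_graph_iff: "simple_graph V E \<longleftrightarrow> finite V \<and> symp E \<and> irreflp E"
  unfolding simple_graph_def symp_def irreflp_def ..

lemma finite_clique_sizes: "finite S \<Longrightarrow> finite {card K | K. K \<subseteq> S \<and> is_clique E K}"
  by (rule finite_subset[of _ "card ` Pow S"]) auto

lemma card_le_clique_number:
  "finite S \<Longrightarrow> K \<subseteq> S \<Longrightarrow> is_clique E K \<Longrightarrow> card K \<le> clique_number S E"
  unfolding clique_number_def by (rule Max_ge[OF finite_clique_sizes]) blast+

lemma maximum_clique_exists:
  assumes "finite S"
  obtains K where "K \<subseteq> S" "is_clique E K" "card K = clique_number S E"
proof -
  have "{} \<subseteq> S \<and> is_clique E {}"
    by (simp add: is_clique_def)
  then have "{card K | K. K \<subseteq> S \<and> is_clique E K} \<noteq> {}"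
    by blast
  from Max_in[OF finite_clique_sizes[OF assms] this]
  have "clique_number S E \<in> {card K | K. K \<subseteq> S \<and> is_clique E K}"
    unfolding clique_number_def .
  then obtain K where K: "K \<subseteq> S" "is_clique E K" "clique_number S E = card K"
    by blast
  show ?thesis by (rule that[OF K(1,2) K(3)[symmetric]])
qed

lemma clique_number_mono:
  assumes "finite T" "S \<subseteq> T"
  shows "clique_number S E \<le> clique_number T E"
proof -
  obtain K where "K \<subseteq> S" "is_clique E K" "card K = clique_number S E"
    by (rule maximum_clique_exists[OF finite_subset[OF assms(2,1)]])
  moreover have "card K \<le> clique_number T E"
    using card_le_clique_number assms calculation(1,2) by blast
  ultimately show ?thesis by simp
qed

lemma clique_number_pos:
  assumes "finite S" "x \<in> S"
  shows "0 < clique_number S E"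
proof -
  have "is_clique E {x}"
    by (simp add: is_clique_def)
  then have "card {x} \<le> clique_number S E"
    using card_le_clique_number[OF assms(1)] assms(2) by blast
  then show ?thesis by simp
qed

lemma is_clique_subset: "is_clique E K \<Longrightarrow> K' \<subseteq> K \<Longrightarrow> is_clique E K'"
  unfolding is_clique_def by blast

lemma is_clique_Un:
  assumes "symp E" "is_clique E K" "is_clique E L"
    and "\<And>k l. k \<in> K \<Longrightarrow> l \<in> L \<Longrightarrow> E k l"
  shows "is_clique E (K \<union> L)"
  unfolding is_clique_def
proof (intro ballI impI)
  fix a b assume "a \<in> K \<union> L" "b \<in> K \<union> L" "a \<noteq> b"
  then consider "a \<in> K" "b \<in> K" | "a \<in> L" "b \<in> L" | "a \<in> K" "b \<in> L" | "a \<in> L" "b \<in> K"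
    by blast
  then show "E a b"
  proof cases
    case 1
    then show ?thesis using assms(2) \<open>a \<noteq> b\<close> unfolding is_clique_def by blast
  next
    case 2
    then show ?thesis using assms(3) \<open>a \<noteq> b\<close> unfolding is_clique_def by blast
  next
    case 3
    then show ?thesis by (rule assms(4))
  next
    case 4
    then show ?thesis using sympD[OF assms(1) assms(4)] by blast
  qed
qed

lemma max_clique_absorbs_complete_vertex:
  assumes "finite V" "symp E" "K \<subseteq> V" "is_clique E K" "card K = clique_number V E"
    and "c \<in> V" "\<And>k. k \<in> K \<Longrightarrow> k \<noteq> c \<Longrightarrow> E c k"
  shows "c \<in> K"
proof (rule ccontr)
  assume "c \<notin> K"
  have "K \<union> {c} \<subseteq> V" using assms(3,6) by blast
  moreover have "is_clique E (K \<union> {c})"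
  proof (rule is_clique_Un[OF assms(2,4)])
    show "is_clique E {c}" by (simp add: is_clique_def)
    show "E k l" if "k \<in> K" "l \<in> {c}" for k l
      using sympD[OF assms(2) assms(7)[OF that(1)]] that \<open>c \<notin> K\<close> by blast
  qed
  ultimately have "card (K \<union> {c}) \<le> clique_number V E"
    by (rule card_le_clique_number[OF assms(1)])
  moreover have "card (K \<union> {c}) = card K + 1"
    using \<open>c \<notin> K\<close> finite_subset[OF assms(3,1)] by simp
  ultimately show False using assms(5) by simp
qed

lemma card_clique_le_colours:
  assumes "proper_colouring S E k f" "K \<subseteq> S" "is_clique E K"
  shows "card K \<le> k"
proof -
  have "inj_on f K" "f ` K \<subseteq> {..<k}"
    using assms unfolding proper_colouring_def is_clique_def inj_on_def by blast+
  then have "card K \<le> card {..<k}"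
    by (rule card_inj_on_le) simp
  then show ?thesis by simp
qed

lemma chromatic_number_le: "proper_colouring S E k f \<Longrightarrow> chromatic_number S E \<le> k"
  unfolding chromatic_number_def by (rule Least_le) blast

lemma injective_proper_colouring:
  assumes "irreflp E" "bij_betw f S {0..<card S}"
  shows "proper_colouring S E (card S) f"
  using assms unfolding proper_colouring_def bij_betw_def inj_on_def irreflp_def by auto

lemma chromatic_colouring_exists:
  assumes "finite S" "irreflp E"
  obtains f where "proper_colouring S E (chromatic_number S E) f"
proof -
  obtain g where "bij_betw g S {0..<card S}"
    using ex_bij_betw_finite_nat[OF assms(1)] ..
  then have "proper_colouring S E (card S) g"
    by (rule injective_proper_colouring[OF assms(2)])
  then have "\<exists>f. proper_colouring S E (chromatic_number S E) f"
    unfolding chromatic_number_def by (rule LeastI[of "\<lambda>k. \<exists>f. proper_colouring S E k f", OF exI])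
  then obtain f where "proper_colouring S E (chromatic_number S E) f" ..
  then show ?thesis by (rule that)
qed

lemma clique_number_le_chromatic_number:
  assumes "finite S" "irreflp E"
  shows "clique_number S E \<le> chromatic_number S E"
proof -
  obtain f where f: "proper_colouring S E (chromatic_number S E) f"
    by (rule chromatic_colouring_exists[OF assms])
  obtain K where K: "K \<subseteq> S" "is_clique E K" "card K = clique_number S E"
    by (rule maximum_clique_exists[OF assms(1)])
  from card_clique_le_colours[OF f K(1,2)] K(3) show ?thesis by simp
qed

lemma perfect_iff_colourings:
  assumes "finite A" "irreflp E"
  shows "perfect A E \<longleftrightarrow> (\<forall>H\<subseteq>A. \<exists>f. proper_colouring H E (clique_number H E) f)"
proof (intro iffI allI impI)
  fix H assume "perfect A E" "H \<subseteq> A"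
  then have "chromatic_number H E = clique_number H E"
    unfolding perfect_def by blast
  moreover obtain f where "proper_colouring H E (chromatic_number H E) f"
    by (rule chromatic_colouring_exists[OF finite_subset[OF \<open>H \<subseteq> A\<close> assms(1)] assms(2)])
  ultimately show "\<exists>f. proper_colouring H E (clique_number H E) f" by auto
next
  assume colourable: "\<forall>H\<subseteq>A. \<exists>f. proper_colouring H E (clique_number H E) f"
  show "perfect A E"
    unfolding perfect_def
  proof (intro allI impI)
    fix H assume "H \<subseteq> A"
    then obtain f where "proper_colouring H E (clique_number H E) f"
      using colourable by blast
    then have "chromatic_number H E \<le> clique_number H E"
      by (rule chromatic_number_le)
    moreover have "clique_number H E \<le> chromatic_number H E"
      by (rule clique_number_le_chromatic_number[OF finite_subset[OF \<open>H \<subseteq> A\<close> assms(1)] assms(2)])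
    ultimately show "chromatic_number H E = clique_number H E" by simp
  qed
qed

lemma proper_colouring_mono:
  "proper_colouring S E k f \<Longrightarrow> k \<le> l \<Longrightarrow> proper_colouring S E l f"
  unfolding proper_colouring_def by (meson less_le_trans)

lemma perfect_clique:
  assumes "finite A" "irreflp E" "is_clique E A"
  shows "perfect A E"
  unfolding perfect_iff_colourings[OF assms(1,2)]
proof (intro allI impI)
  fix H assume "H \<subseteq> A"
  have "finite H" by (rule finite_subset[OF \<open>H \<subseteq> A\<close> assms(1)])
  have "card H \<le> clique_number H E"
    by (rule card_le_clique_number[OF \<open>finite H\<close> order_refl is_clique_subset[OF assms(3) \<open>H \<subseteq> A\<close>]])
  obtain f where "bij_betw f H {0..<card H}"
    using ex_bij_betw_finite_nat[OF \<open>finite H\<close>] ..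
  then have "proper_colouring H E (card H) f"
    by (rule injective_proper_colouring[OF assms(2)])
  then show "\<exists>f. proper_colouring H E (clique_number H E) f"
    using proper_colouring_mono \<open>card H \<le> clique_number H E\<close> by blast
qed

lemma perfect_edgeless:
  assumes "finite A" "irreflp E" "\<forall>x\<in>A. \<forall>y\<in>A. \<not> E x y"
  shows "perfect A E"
  unfolding perfect_iff_colourings[OF assms(1,2)]
proof (intro allI impI)
  fix H assume "H \<subseteq> A"
  have "0 < clique_number H E" if "x \<in> H" for x
    by (rule clique_number_pos[OF finite_subset[OF \<open>H \<subseteq> A\<close> assms(1)] that])
  moreover have "\<not> E x y" if "x \<in> H" "y \<in> H" for x y
    using assms(3) \<open>H \<subseteq> A\<close> that by blast
  ultimately have "proper_colouring H E (clique_number H E) (\<lambda>_. 0)"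
    unfolding proper_colouring_def by blast
  then show "\<exists>f. proper_colouring H E (clique_number H E) f" by metis
qed

lemma perfect_Un:
  assumes "finite A" "finite B" "irreflp E" "perfect A E" "perfect B E"
    and no_edges: "\<And>a b. a \<in> A \<Longrightarrow> b \<in> B \<Longrightarrow> \<not> E a b \<and> \<not> E b a"
  shows "perfect (A \<union> B) E"
  unfolding perfect_iff_colourings[OF finite_UnI[OF assms(1,2)] assms(3)]
proof (intro allI impI)
  fix H assume H: "H \<subseteq> A \<union> B"
  then have "finite H" using assms(1,2) finite_subset by blast
  have "\<forall>H'\<subseteq>A. \<exists>f. proper_colouring H' E (clique_number H' E) f"
    using assms(4) perfect_iff_colourings[OF assms(1,3)] by simp
  then obtain f where "proper_colouring (H \<inter> A) E (clique_number (H \<inter> A) E) f"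
    by (meson Int_lower2)
  then have f: "proper_colouring (H \<inter> A) E (clique_number H E) f"
    by (rule proper_colouring_mono) (rule clique_number_mono[OF \<open>finite H\<close>], blast)
  have "\<forall>H'\<subseteq>B. \<exists>f. proper_colouring H' E (clique_number H' E) f"
    using assms(5) perfect_iff_colourings[OF assms(2,3)] by simp
  then obtain g where "proper_colouring (H - A) E (clique_number (H - A) E) g"
    using H by (meson Diff_subset_conv subset_trans sup_commute)
  then have g: "proper_colouring (H - A) E (clique_number H E) g"
    by (rule proper_colouring_mono) (rule clique_number_mono[OF \<open>finite H\<close>], blast)
  have "proper_colouring H E (clique_number H E) (\<lambda>x. if x \<in> A then f x else g x)"
    unfolding proper_colouring_def
  proof (intro conjI ballI impI)
    fix x assume "x \<in> H"
    then show "(if x \<in> A then f x else g x) < clique_number H E"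
      using f g unfolding proper_colouring_def by simp
  next
    fix x y assume xy: "x \<in> H" "y \<in> H" "E x y"
    have "x \<in> A \<longleftrightarrow> y \<in> A"
      using xy H no_edges by blast
    then show "(if x \<in> A then f x else g x) \<noteq> (if y \<in> A then f y else g y)"
      using f g xy unfolding proper_colouring_def by simp
  qed
  then show "\<exists>f. proper_colouring H E (clique_number H E) f" by metis
qed

definition meets_max_cliques :: "'a set \<Rightarrow> ('a \<Rightarrow> 'a \<Rightarrow> bool) \<Rightarrow> 'a set \<Rightarrow> bool" where
  "meets_max_cliques S E A \<longleftrightarrow>
     (\<forall>K\<subseteq>S. is_clique E K \<longrightarrow> card K = clique_number S E \<longrightarrow> K \<inter> A \<noteq> {})"

lemma meets_max_cliques_subsetD:
  assumes "finite T" "S \<subseteq> T" "meets_max_cliques S E A"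
    and "K \<subseteq> S" "is_clique E K" "card K = clique_number T E"
  shows "K \<inter> A \<noteq> {}"
proof -
  have "card K = clique_number S E"
  proof (rule antisym)
    show "card K \<le> clique_number S E"
      by (rule card_le_clique_number[OF finite_subset[OF assms(2,1)] assms(4,5)])
    show "clique_number S E \<le> card K"
      using clique_number_mono[OF assms(1,2)] assms(6) by (simp only:)
  qed
  with assms(3-5) show ?thesis
    unfolding meets_max_cliques_def by blast
qed

lemma ex_good_partition_iff:
  assumes "finite S"
  shows "(\<exists>B. good_partition S E A B) \<longleftrightarrow> A \<subseteq> S \<and> perfect A E \<and> meets_max_cliques S E A"
proof
  assume "\<exists>B. good_partition S E A B"
  then obtain B where B: "A \<union> B = S" "perfect A E" "clique_number B E < clique_number S E"
    unfolding good_partition_def by blast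
  have "K \<inter> A \<noteq> {}" if K: "K \<subseteq> S" "is_clique E K" "card K = clique_number S E" for K
  proof
    assume "K \<inter> A = {}"
    then have "K \<subseteq> B" using B(1) K(1) by blast
    then have "card K \<le> clique_number B E"
      using card_le_clique_number[OF _ _ K(2)] assms B(1) by blast
    then show False using K(3) B(3) by simp
  qed
  then show "A \<subseteq> S \<and> perfect A E \<and> meets_max_cliques S E A"
    using B(1,2) unfolding meets_max_cliques_def by blast
next
  assume A: "A \<subseteq> S \<and> perfect A E \<and> meets_max_cliques S E A"
  obtain K where K: "K \<subseteq> S - A" "is_clique E K" "card K = clique_number (S - A) E"
    by (rule maximum_clique_exists[OF finite_Diff[OF assms]])
  have "clique_number (S - A) E \<le> clique_number S E"
    by (rule clique_number_mono[OF assms]) blast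
  moreover have "card K \<noteq> clique_number S E"
    using A K(1,2) unfolding meets_max_cliques_def by blast
  ultimately have "clique_number (S - A) E < clique_number S E"
    using K(3) by simp
  then have "good_partition S E A (S - A)"
    using A unfolding good_partition_def by blast
  then show "\<exists>B. good_partition S E A B" ..
qed

lemma minimally_non_pd_no_good_partition:
  assumes "minimally_non_pd V E"
  shows "\<not> good_partition V E A B"
proof
  assume good: "good_partition V E A B"
  obtain H where H: "H \<subseteq> V" "has_edge H E" "\<not> (\<exists>A B. good_partition H E A B)"
    using assms unfolding minimally_non_pd_def perfectly_divisible_def by blast
  have "H = V"
  proof (rule ccontr)
    assume "H \<noteq> V"
    with H(1) have "perfectly_divisible H E"
      using assms unfolding minimally_non_pd_def by auto
    then show False using H unfolding perfectly_divisible_def by blast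
  qed
  with H(3) good show False by blast
qed

lemma ex_perfect_meeting_max_cliques_of_proper_subset:
  assumes "simple_graph V E" "minimally_non_pd V E" "H \<subset> V" "H \<noteq> {}"
  shows "\<exists>A\<subseteq>H. perfect A E \<and> meets_max_cliques H E A"
proof -
  have "finite H" "irreflp E"
    using assms(1,3) finite_subset unfolding simple_graph_iff by auto
  show ?thesis
  proof (cases "has_edge H E")
    case True
    moreover have "perfectly_divisible H E"
      using assms(2,3) unfolding minimally_non_pd_def by blast
    ultimately obtain A B where "good_partition H E A B"
      unfolding perfectly_divisible_def by blast
    then show ?thesis using ex_good_partition_iff[OF \<open>finite H\<close>] by blast
  next
    case False
    then have "perfect H E"
      using perfect_edgeless[OF \<open>finite H\<close> \<open>irreflp E\<close>] unfolding has_edge_def by blast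
    moreover have "meets_max_cliques H E H"
      unfolding meets_max_cliques_def
    proof (intro allI impI)
      fix K assume "K \<subseteq> H" "is_clique E K" "card K = clique_number H E"
      moreover obtain x where "x \<in> H" using assms(4) by blast
      ultimately have "0 < card K" using clique_number_pos[OF \<open>finite H\<close>] by simp
      then have "K \<noteq> {}" by auto
      then show "K \<inter> H \<noteq> {}" using \<open>K \<subseteq> H\<close> by blast
    qed
    ultimately show ?thesis by blast
  qed
qed

definition component :: "'a set \<Rightarrow> ('a \<Rightarrow> 'a \<Rightarrow> bool) \<Rightarrow> 'a \<Rightarrow> 'a set" where
  "component S E x = {y \<in> S. connected_in S E x y}"

lemma connected_in_refl: "connected_in S E x x"
  unfolding connected_in_def by simp

lemma connected_in_edge: "x \<in> S \<Longrightarrow> y \<in> S \<Longrightarrow> E x y \<Longrightarrow> connected_in S E x y"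
  unfolding connected_in_def by (rule r_into_rtranclp) simp

lemma connected_in_trans:
  "connected_in S E x y \<Longrightarrow> connected_in S E y z \<Longrightarrow> connected_in S E x z"
  unfolding connected_in_def by (rule rtranclp_trans)

lemma connected_in_sym:
  assumes "symp E" "connected_in S E x y"
  shows "connected_in S E y x"
  using assms(2) unfolding connected_in_def
proof (induction rule: rtranclp_induct)
  case base
  then show ?case by simp
next
  case (step y z)
  then have "y \<in> S" "z \<in> S" "E z y"
    using sympD[OF assms(1), of y z] by simp_all
  with step.IH show ?case
    by (simp add: converse_rtranclp_into_rtranclp)
qed

lemma component_closed:
  assumes "y \<in> component S E x" "z \<in> S" "E y z"
  shows "z \<in> component S E x"
proof -
  have "y \<in> S" "connected_in S E x y"
    using assms(1) unfolding component_def by simp_all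
  with assms(2,3) have "connected_in S E x z"
    using connected_in_trans connected_in_edge by metis
  with assms(2) show ?thesis
    unfolding component_def by simp
qed

lemma component_disjoint:
  assumes "symp E" "y \<in> S" "y \<notin> component S E x"
  shows "component S E x \<inter> component S E y = {}"
proof -
  have False if "z \<in> component S E x" "z \<in> component S E y" for z
  proof -
    have "connected_in S E x z" "connected_in S E y z"
      using that unfolding component_def by simp_all
    then have "connected_in S E x y"
      using connected_in_trans connected_in_sym[OF assms(1)] by metis
    then show False using assms(2,3) unfolding component_def by simp
  qed
  then show ?thesis by blast
qed

lemma rtranclp_exit_step:
  assumes "R\<^sup>*\<^sup>* a b" "P a" "\<not> P b"
  shows "\<exists>u v. R\<^sup>*\<^sup>* a u \<and> R u v \<and> P u \<and> \<not> P v"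
  using assms(1,3)
proof (induction rule: rtranclp_induct)
  case base
  then show ?case using assms(2) by simp
next
  case (step y z)
  show ?case
  proof (cases "P y")
    case True
    with step.hyps step.prems show ?thesis by (intro exI[of _ y] exI[of _ z]) simp
  next
    case False
    then show ?thesis by (rule step.IH)
  qed
qed

lemma connected_in_exit_step:
  assumes "connected_in S E a b" "P a" "\<not> P b"
  shows "\<exists>u v. connected_in S E a u \<and> u \<in> S \<and> v \<in> S \<and> E u v \<and> P u \<and> \<not> P v"
  using rtranclp_exit_step[OF assms(1)[unfolded connected_in_def] assms(2,3)]
  unfolding connected_in_def by simp

lemma component_boundary_edge:
  assumes "symp E" "a \<in> component S E x" "b \<in> component S E x" "E c a" "\<not> E c b"
  shows "\<exists>p\<in>component S E x. \<exists>q\<in>component S E x. E p q \<and> E c p \<and> \<not> E c q"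
proof -
  have xa: "connected_in S E x a" and xb: "connected_in S E x b"
    using assms(2,3) unfolding component_def by simp_all
  have "connected_in S E a b"
    by (rule connected_in_trans[OF connected_in_sym[OF assms(1) xa] xb])
  then obtain p q where p: "connected_in S E a p" "p \<in> S" and "q \<in> S" "E p q" "E c p" "\<not> E c q"
    using connected_in_exit_step[of S E a b "E c"] assms(4,5) by blast
  moreover have "p \<in> component S E x"
    using connected_in_trans[OF xa p(1)] p(2) unfolding component_def by blast
  moreover have "q \<in> component S E x"
    using component_closed calculation(3,4,7) by metis
  ultimately show ?thesis by blast
qed

lemma connector_has_neighbour_in_component:
  assumes "symp E" "connected_in (insert c S) E x w" "x \<in> S" "w \<notin> component S E x"
  shows "\<exists>u\<in>component S E x. E c u"
proof -
  have "x \<in> component S E x"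
    using assms(3) by (simp add: component_def connected_in_refl)
  then obtain u v where u: "u \<in> component S E x"
    and v: "v \<notin> component S E x" "v \<in> insert c S" "E u v"
    using connected_in_exit_step[of "insert c S" E x w "\<lambda>z. z \<in> component S E x"] assms(2,4)
    by blast
  have "v \<notin> S"
    using component_closed[OF u _ v(3)] v(1) by blast
  with v(2) have "E u c" using v(3) by blast
  then show ?thesis using u sympD[OF assms(1), of u c] by blast
qed

lemma induced_P5I:
  assumes "symp E" "irreflp E" "{a, b, c, d, e} \<subseteq> V"
    and "E a b" "E b c" "E c d" "E d e"
    and "\<not> E a c" "\<not> E a d" "\<not> E a e" "\<not> E b d" "\<not> E b e" "\<not> E c e"
  shows "induced_P5 V E"
proof -
  have sym: "E x y \<longleftrightarrow> E y x" for x y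
    using sympD[OF assms(1)] by blast
  have loops: "\<not> E x x" for x
    using irreflpD[OF assms(2)] .
  have edges: "E b a" "E c b" "E d c" "E e d"
    using assms(4-7) sym[of a b] sym[of b c] sym[of c d] sym[of d e] by simp_all
  have non_edges: "\<not> E c a" "\<not> E d a" "\<not> E e a" "\<not> E d b" "\<not> E e b" "\<not> E e c"
    using assms(8-13) sym[of a c] sym[of a d] sym[of a e] sym[of b d] sym[of b e] sym[of c e]
    by simp_all
  have all5: "(\<forall>i<5. P i) \<longleftrightarrow> P 0 \<and> P 1 \<and> P 2 \<and> P 3 \<and> P (4::nat)" for P
    by (auto simp: less_Suc_eq eval_nat_numeral)
  let ?v = "(!) [a, b, c, d, e]"
  have "distinct [a, b, c, d, e]"
    using assms(4-13) edges non_edges loops by auto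
  then have "inj_on ?v {0..<5}"
    by (rule inj_on_nth) simp
  moreover have "\<forall>i<5. ?v i \<in> V"
    unfolding all5 using assms(3) by simp
  moreover have "\<forall>i<5. \<forall>j<5. E (?v i) (?v j) \<longleftrightarrow> (i = j + 1 \<or> j = i + 1)"
    unfolding all5 using assms(4-13) edges non_edges loops by simp
  ultimately show ?thesis
    unfolding induced_P5_def by blast
qed

lemma induced_P5_of_mixed_vertex:
  assumes "symp E" "irreflp E" "S \<subseteq> V" "c \<in> V" "y \<in> S" "y \<notin> component S E x"
    and "a \<in> component S E x" "E c a" "b \<in> component S E x" "\<not> E c b"
    and "a' \<in> component S E y" "E c a'" "b' \<in> component S E y" "\<not> E c b'"
  shows "induced_P5 V E"
proof -
  obtain p q where pq: "p \<in> component S E x" "q \<in> component S E x" "E p q" "E c p" "\<not> E c q"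
    using component_boundary_edge[OF assms(1,7,9,8,10)] by blast
  obtain p' q' where pq': "p' \<in> component S E y" "q' \<in> component S E y" "E p' q'" "E c p'" "\<not> E c q'"
    using component_boundary_edge[OF assms(1,11,13,12,14)] by blast
  have apart: "\<not> E s t" if "s \<in> component S E x" "t \<in> component S E y" for s t
  proof
    assume "E s t"
    moreover have "t \<in> S" using that(2) unfolding component_def by blast
    ultimately have "t \<in> component S E x"
      using component_closed[OF that(1)] by blast
    then show False using component_disjoint[OF assms(1,5,6)] that(2) by blast
  qed
  show ?thesis
  proof (rule induced_P5I[OF assms(1,2)])
    show "{q, p, c, p', q'} \<subseteq> V"
      using pq(1,2) pq'(1,2) assms(3,4) unfolding component_def by blast
    show "E q p" by (rule sympD[OF assms(1) pq(3)])
    show "E p c" by (rule sympD[OF assms(1) pq(4)])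
    show "E c p'" "E p' q'" "\<not> E c q'" by (fact pq')+
    show "\<not> E q c" using pq(5) sympD[OF assms(1), of q c] by blast
    show "\<not> E q p'" "\<not> E q q'" "\<not> E p p'" "\<not> E p q'"
      using apart pq(1,2) pq'(1,2) by blast+
  qed
qed

lemma minimum_clique_cutset_reconnects:
  assumes "finite V" "clique_cutset V E C" "\<And>C'. clique_cutset V E C' \<Longrightarrow> card C \<le> card C'"
    and "c \<in> C" "z \<in> V - C" "w \<in> V - C"
  shows "connected_in (insert c (V - C)) E z w"
proof -
  have "C \<subseteq> V" "is_clique E C"
    using assms(2) unfolding clique_cutset_def by simp_all
  have "card (C - {c}) < card C"
    using finite_subset[OF \<open>C \<subseteq> V\<close> assms(1)] assms(4) by (rule card_Diff1_less)
  then have "\<not> clique_cutset V E (C - {c})"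
    using assms(3) by fastforce
  moreover have "V - (C - {c}) = insert c (V - C)"
    using assms(4) \<open>C \<subseteq> V\<close> by blast
  ultimately show ?thesis
    using assms(5,6) \<open>C \<subseteq> V\<close> is_clique_subset[OF \<open>is_clique E C\<close>, of "C - {c}"]
    unfolding clique_cutset_def disconnected_def by auto
qed

locale clique_separation =
  fixes V :: "'a set" and E :: "'a \<Rightarrow> 'a \<Rightarrow> bool" and X Y C :: "'a set"
  assumes simple: "simple_graph V E"
    and partition: "V = X \<union> Y \<union> C" "X \<inter> Y = {}" "X \<inter> C = {}" "Y \<inter> C = {}"
    and sides_nonempty: "X \<noteq> {}" "Y \<noteq> {}"
    and no_edges: "\<And>x y. x \<in> X \<Longrightarrow> y \<in> Y \<Longrightarrow> \<not> E x y"
    and clique: "is_clique E C"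
begin

lemma finite: "finite V" and sym: "symp E" and irrefl: "irreflp E"
  using simple unfolding simple_graph_iff by simp_all

lemma swap: "clique_separation V E Y X C"
proof
  show "\<not> E y x" if "y \<in> Y" "x \<in> X" for x y
    using no_edges[OF that(2,1)] sympD[OF sym, of y x] by blast
qed (use simple partition sides_nonempty clique in auto)

lemma clique_on_one_side:
  assumes "K \<subseteq> V" "is_clique E K"
  shows "K \<subseteq> X \<union> C \<or> K \<subseteq> Y \<union> C"
proof (rule ccontr)
  assume "\<not> ?thesis"
  then obtain x y where "x \<in> K" "x \<in> X" "y \<in> K" "y \<in> Y"
    using assms(1) partition(1) by blast
  moreover have "x \<noteq> y" using calculation partition(2) by blast
  ultimately show False
    using assms(2) no_edges unfolding is_clique_def by blast
qed

lemma complete_separator_vertex_in_max_clique: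
  assumes "K \<subseteq> X \<union> C" "is_clique E K" "card K = clique_number V E"
    and "c \<in> C" "\<forall>x\<in>X. E c x"
  shows "c \<in> K"
proof (rule max_clique_absorbs_complete_vertex[OF finite sym _ assms(2,3)])
  show "K \<subseteq> V" "c \<in> V" using assms(1,4) partition(1) by auto
  show "E c k" if "k \<in> K" "k \<noteq> c" for k
  proof (cases "k \<in> X")
    case True
    then show ?thesis using assms(5) by blast
  next
    case False
    then have "k \<in> C" using that(1) assms(1) by blast
    then show ?thesis using clique assms(4) that(2) unfolding is_clique_def by metis
  qed
qed

lemma clique_number_side_plus_separator:
  assumes "\<forall>c\<in>C. \<forall>x\<in>X. E c x"
  shows "clique_number X E + card C \<le> clique_number V E"
proof -
  have "finite X" "finite C" using finite partition(1) by simp_all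
  obtain K where K: "K \<subseteq> X" "is_clique E K" "card K = clique_number X E"
    by (rule maximum_clique_exists[OF \<open>finite X\<close>])
  have "is_clique E (K \<union> C)"
  proof (rule is_clique_Un[OF sym K(2) clique])
    show "E k c" if "k \<in> K" "c \<in> C" for k c
      using sympD[OF sym, of c k] assms that K(1) by blast
  qed
  then have "card (K \<union> C) \<le> clique_number V E"
    using card_le_clique_number[OF finite] K(1) partition(1) by blast
  moreover have "card (K \<union> C) = card K + card C"
    by (rule card_Un_disjoint)
      (use K(1) partition(3) finite_subset[OF K(1) \<open>finite X\<close>] \<open>finite C\<close> in auto)
  ultimately show ?thesis using K(3) by simp
qed

lemma card_max_clique_Int_side:
  assumes complete: "\<forall>c\<in>C. \<forall>x\<in>X. E c x"
    and K: "K \<subseteq> X \<union> C" "is_clique E K" "card K = clique_number V E"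
  shows "card (K \<inter> X) = clique_number X E"
proof (rule antisym)
  have "finite X" "finite C" using finite partition(1) by simp_all
  show "card (K \<inter> X) \<le> clique_number X E"
    by (rule card_le_clique_number[OF \<open>finite X\<close> _ is_clique_subset[OF K(2)]]) auto
  have "C \<subseteq> K"
    using complete_separator_vertex_in_max_clique[OF K] complete by blast
  with K(1) have "K = (K \<inter> X) \<union> C" by blast
  moreover have "card ((K \<inter> X) \<union> C) = card (K \<inter> X) + card C"
    by (rule card_Un_disjoint) (use partition(3) \<open>finite X\<close> \<open>finite C\<close> in auto)
  ultimately have "card K = card (K \<inter> X) + card C" by simp
  then show "clique_number X E \<le> card (K \<inter> X)"
    using clique_number_side_plus_separator[OF complete] K(3) by simp
qed

lemma meets_max_cliques_pair:
  assumes "u \<in> C" "\<forall>y\<in>Y. E u y" "v \<in> C" "\<forall>x\<in>X. E v x"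
  shows "meets_max_cliques V E {u, v}"
  unfolding meets_max_cliques_def
proof (intro allI impI)
  interpret swap: clique_separation V E Y X C by (rule swap)
  fix K assume K: "K \<subseteq> V" "is_clique E K" "card K = clique_number V E"
  from clique_on_one_side[OF K(1,2)] consider "K \<subseteq> X \<union> C" | "K \<subseteq> Y \<union> C" by blast
  then show "K \<inter> {u, v} \<noteq> {}"
  proof cases
    case 1 then have "v \<in> K" using complete_separator_vertex_in_max_clique K(2,3) assms(3,4) by blast
    then show ?thesis by blast
  next
    case 2 then have "u \<in> K" using swap.complete_separator_vertex_in_max_clique K(2,3) assms(1,2) by blast
    then show ?thesis by blast
  qed
qed

lemma meets_max_cliques_via_separator:
  assumes complete: "\<forall>c\<in>C. \<forall>x\<in>X. E c x"
    and A: "meets_max_cliques (Y \<union> C) E A" "A \<inter> C \<noteq> {}"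
  shows "meets_max_cliques V E A"
  unfolding meets_max_cliques_def
proof (intro allI impI)
  fix K assume K: "K \<subseteq> V" "is_clique E K" "card K = clique_number V E"
  from clique_on_one_side[OF K(1,2)] consider "K \<subseteq> X \<union> C" | "K \<subseteq> Y \<union> C" by blast
  then show "K \<inter> A \<noteq> {}"
  proof cases
    case 1
    then have "C \<subseteq> K"
      using complete_separator_vertex_in_max_clique K(2,3) complete by blast
    then show ?thesis using A(2) by blast
  next
    case 2
    then show ?thesis
      using meets_max_cliques_subsetD[OF finite _ A(1) _ K(2,3)] partition(1) by blast
  qed
qed

lemma meets_max_cliques_Un_sides:
  assumes complete: "\<forall>c\<in>C. \<forall>x\<in>X. E c x"
    and A0: "meets_max_cliques (Y \<union> C) E A0" and A1: "meets_max_cliques X E A1"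
  shows "meets_max_cliques V E (A0 \<union> A1)"
  unfolding meets_max_cliques_def
proof (intro allI impI)
  fix K assume K: "K \<subseteq> V" "is_clique E K" "card K = clique_number V E"
  from clique_on_one_side[OF K(1,2)] consider "K \<subseteq> X \<union> C" | "K \<subseteq> Y \<union> C" by blast
  then show "K \<inter> (A0 \<union> A1) \<noteq> {}"
  proof cases
    case 1
    then have "card (K \<inter> X) = clique_number X E"
      using card_max_clique_Int_side[OF complete _ K(2,3)] by blast
    then have "K \<inter> X \<inter> A1 \<noteq> {}"
      using A1[unfolded meets_max_cliques_def, rule_format, of "K \<inter> X"]
        is_clique_subset[OF K(2), of "K \<inter> X"] by blast
    then show ?thesis by blast
  next
    case 2
    then have "K \<inter> A0 \<noteq> {}"
      using meets_max_cliques_subsetD[OF finite _ A0 _ K(2,3)] partition(1) by blast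
    then show ?thesis by blast
  qed
qed

lemma ex_perfect_meeting_max_cliques_complete_side:
  assumes complete: "\<forall>c\<in>C. \<forall>x\<in>X. E c x"
    and hereditary: "\<And>H. H \<subset> V \<Longrightarrow> H \<noteq> {} \<Longrightarrow> \<exists>A\<subseteq>H. perfect A E \<and> meets_max_cliques H E A"
  shows "\<exists>A\<subseteq>V. perfect A E \<and> meets_max_cliques V E A"
proof -
  have "Y \<union> C \<subset> V" "Y \<union> C \<noteq> {}"
    using partition sides_nonempty by auto
  then obtain A0 where A0: "A0 \<subseteq> Y \<union> C" "perfect A0 E" "meets_max_cliques (Y \<union> C) E A0"
    using hereditary[of "Y \<union> C"] by blast
  show ?thesis
  proof (cases "A0 \<inter> C = {}")
    case False
    then have "meets_max_cliques V E A0"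
      by (rule meets_max_cliques_via_separator[OF complete A0(3)])
    then show ?thesis using A0(1,2) partition(1) by blast
  next
    case True
    have "X \<subset> V" "X \<noteq> {}"
      using partition sides_nonempty by auto
    then obtain A1 where A1: "A1 \<subseteq> X" "perfect A1 E" "meets_max_cliques X E A1"
      using hereditary[of X] by blast
    have "A0 \<subseteq> Y" using A0(1) True by blast
    have "perfect (A0 \<union> A1) E"
    proof (rule perfect_Un[OF _ _ irrefl A0(2) A1(2)])
      show "finite A0" "finite A1"
        using \<open>A0 \<subseteq> Y\<close> A1(1) finite partition(1) finite_subset by blast+
      show "\<not> E a b \<and> \<not> E b a" if "a \<in> A0" "b \<in> A1" for a b
        using no_edges[of b a] sympD[OF sym, of a b] that \<open>A0 \<subseteq> Y\<close> A1(1) by blast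
    qed
    moreover have "meets_max_cliques V E (A0 \<union> A1)"
      by (rule meets_max_cliques_Un_sides[OF complete A0(3) A1(3)])
    moreover have "A0 \<union> A1 \<subseteq> V" using A0(1) A1(1) partition(1) by blast
    ultimately show ?thesis by blast
  qed
qed

lemma ex_perfect_meeting_max_cliques:
  assumes sides: "\<forall>c\<in>C. (\<forall>x\<in>X. E c x) \<or> (\<forall>y\<in>Y. E c y)"
    and hereditary: "\<And>H. H \<subset> V \<Longrightarrow> H \<noteq> {} \<Longrightarrow> \<exists>A\<subseteq>H. perfect A E \<and> meets_max_cliques H E A"
  shows "\<exists>A\<subseteq>V. perfect A E \<and> meets_max_cliques V E A"
proof -
  interpret swap: clique_separation V E Y X C by (rule swap)
  consider "\<forall>c\<in>C. \<forall>x\<in>X. E c x" | "\<forall>c\<in>C. \<forall>y\<in>Y. E c y"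
    | u v where "u \<in> C" "\<forall>y\<in>Y. E u y" "v \<in> C" "\<forall>x\<in>X. E v x"
    using sides by blast
  then show ?thesis
  proof cases
    case 1
    then show ?thesis by (rule ex_perfect_meeting_max_cliques_complete_side[OF _ hereditary])
  next
    case 2
    then show ?thesis by (rule swap.ex_perfect_meeting_max_cliques_complete_side[OF _ hereditary])
  next
    case (3 u v)
    have "perfect {u, v} E"
      by (rule perfect_clique[OF _ irrefl is_clique_subset[OF clique]]) (use 3 in auto)
    moreover have "{u, v} \<subseteq> V" using 3 partition(1) by blast
    ultimately show ?thesis using meets_max_cliques_pair[OF 3] by blast
  qed
qed

end

lemma component_clique_separation:
  assumes "simple_graph V E" "C \<subseteq> V" "is_clique E C"
    and "x \<in> V - C" "y \<in> V - C" "\<not> connected_in (V - C) E x y"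
  shows "clique_separation V E (component (V - C) E x) (V - C - component (V - C) E x) C"
proof
  show "component (V - C) E x \<noteq> {}"
    using assms(4) by (auto simp: component_def connected_in_refl)
  show "V - C - component (V - C) E x \<noteq> {}"
    using assms(5,6) by (auto simp: component_def)
  show "\<not> E u v" if "u \<in> component (V - C) E x" "v \<in> V - C - component (V - C) E x" for u v
    using component_closed[OF that(1)] that(2) by blast
qed (use assms(1-3) in \<open>auto simp: component_def\<close>)

lemma minimum_clique_cutset_vertex_complete_to_side:
  assumes graph: "simple_graph V E" and P5: "P5_free V E" and cut: "clique_cutset V E C"
    and minimum: "\<And>C'. clique_cutset V E C' \<Longrightarrow> card C \<le> card C'"
    and x: "x \<in> V - C" and "c \<in> C"
  shows "(\<forall>u\<in>component (V - C) E x. E c u) \<or> (\<forall>y\<in>V - C - component (V - C) E x. E c y)"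
proof (rule ccontr)
  assume "\<not> ?thesis"
  then obtain b y where b: "b \<in> component (V - C) E x" "\<not> E c b"
    and y: "y \<in> V - C" "y \<notin> component (V - C) E x" "\<not> E c y"
    by blast
  have "finite V" "symp E" "irreflp E"
    using graph unfolding simple_graph_iff by simp_all
  have "c \<in> V" using cut \<open>c \<in> C\<close> unfolding clique_cutset_def by blast
  have "y \<in> component (V - C) E y"
    using y(1) by (simp add: component_def connected_in_refl)
  have "x \<notin> component (V - C) E y"
    using component_disjoint[OF \<open>symp E\<close> y(1,2)] x
    by (auto simp: component_def connected_in_refl)
  obtain a where a: "a \<in> component (V - C) E x" "E c a"
    using connector_has_neighbour_in_component[OF \<open>symp E\<close>
        minimum_clique_cutset_reconnects[OF \<open>finite V\<close> cut minimum \<open>c \<in> C\<close> x y(1)] x y(2)]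
    by blast
  obtain a' where a': "a' \<in> component (V - C) E y" "E c a'"
    using connector_has_neighbour_in_component[OF \<open>symp E\<close>
        minimum_clique_cutset_reconnects[OF \<open>finite V\<close> cut minimum \<open>c \<in> C\<close> y(1) x] y(1)
        \<open>x \<notin> component (V - C) E y\<close>]
    by blast
  have "induced_P5 V E"
    by (rule induced_P5_of_mixed_vertex[OF \<open>symp E\<close> \<open>irreflp E\<close> Diff_subset \<open>c \<in> V\<close>
          y(1,2) a b a' \<open>y \<in> component (V - C) E y\<close> y(3)])
  with P5 show False unfolding P5_free_def by blast
qed

lemma minimum_clique_cutset_split:
  assumes graph: "simple_graph V E" and P5: "P5_free V E" and cut: "clique_cutset V E C"
    and minimum: "\<And>C'. clique_cutset V E C' \<Longrightarrow> card C \<le> card C'"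
  shows "\<exists>X Y. clique_separation V E X Y C \<and> (\<forall>c\<in>C. (\<forall>x\<in>X. E c x) \<or> (\<forall>y\<in>Y. E c y))"
proof -
  have "C \<subseteq> V" "is_clique E C" "disconnected (V - C) E"
    using cut unfolding clique_cutset_def by simp_all
  then obtain x y where "x \<in> V - C" "y \<in> V - C" "\<not> connected_in (V - C) E x y"
    unfolding disconnected_def by blast
  then show ?thesis
    using component_clique_separation[OF graph \<open>C \<subseteq> V\<close> \<open>is_clique E C\<close>]
      minimum_clique_cutset_vertex_complete_to_side[OF graph P5 cut minimum]
    by blast
qed

theorem theorem2:
  fixes V :: "'a set" and E :: "'a \<Rightarrow> 'a \<Rightarrow> bool"
  assumes "simple_graph V E"
    and "P5_free V E"
    and "minimally_non_pd V E"
  shows "\<not> (\<exists>C. clique_cutset V E C)"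
proof
  assume "\<exists>C. clique_cutset V E C"
  then obtain C where cut: "clique_cutset V E C"
    and minimum: "\<And>C'. clique_cutset V E C' \<Longrightarrow> card C \<le> card C'"
    by (metis ex_has_least_nat)
  obtain X Y where separation: "clique_separation V E X Y C"
    and sides: "\<forall>c\<in>C. (\<forall>x\<in>X. E c x) \<or> (\<forall>y\<in>Y. E c y)"
    using minimum_clique_cutset_split[OF assms(1,2) cut minimum] by blast
  obtain A where "A \<subseteq> V" "perfect A E" "meets_max_cliques V E A"
    using clique_separation.ex_perfect_meeting_max_cliques[OF separation sides
      ex_perfect_meeting_max_cliques_of_proper_subset[OF assms(1,3)]] by blast
  then have "\<exists>B. good_partition V E A B"
    using ex_good_partition_iff assms(1) unfolding simple_graph_iff by blast
  then show False
    using minimally_non_pd_no_good_partition[OF assms(3)] by blast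
qed

end
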